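(* A word $w$ over $\{a,b\}$ is good if and only if $w=\epsilon$ or there exist integers $n,e,i,f$ with $e\ge0$, $0\le i,f\le n$, and ($e=0 \Rightarrow n=\max(i,f)$), such that $w=a^i(ba^n)^eba^f$ or $w=b^i(ab^n)^eab^f$.
   Context: Let $E$ be the morphism exchanging $a$ and $b$, and $\tilde w$ the mirror image (reversal) of $w$. A word $w$ over $\{a,b\}$ is bad if one of $w,\tilde w,E(w),E(\tilde w)$ has a factor of the form $a^kb^h$ with $k,h\ge 2$, or of the form $a^kba^lb^m$ with $k>l\ge 1$, $m\ge1$; $w$ is good if it is not bad. $\epsilon$ denotes the empty word. *)

theory Defs
  imports Main "HOL-Library.Sublist"
begin

datatype letter = a | b

type_synonym word = "letter list"

fun exch :: "letter \<Rightarrow> letter" where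
  "exch a = b" | "exch b = a"

definition E :: "word \<Rightarrow> word" where
  "E w = map exch w"

definition factor :: "word \<Rightarrow> word \<Rightarrow> bool" where
  "factor u w \<longleftrightarrow> sublist u w"

definition has_bad_factor :: "word \<Rightarrow> bool" where
  "has_bad_factor w \<longleftrightarrow>
     (\<exists>k h. k \<ge> 2 \<and> h \<ge> 2 \<and> factor (replicate k a @ replicate h b) w) \<or>
     (\<exists>k l m. k > l \<and> l \<ge> 1 \<and> m \<ge> 1 \<and>
        factor (replicate k a @ [b] @ replicate l a @ replicate m b) w)"

definition bad :: "word \<Rightarrow> bool" where
  "bad w \<longleftrightarrow> has_bad_factor w \<or> has_bad_factor (rev w) \<or>
               has_bad_factor (E w) \<or> has_bad_factor (E (rev w))"

definition good :: "word \<Rightarrow> bool" where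
  "good w \<longleftrightarrow> \<not> bad w"

end

theory Submission
  imports Defs
begin

text \<open>
  Every word of the form a^i (b a^n)^e b a^f with i, f \<le> n is a factor of the periodic
  word a^n (b a^n)^m, whose runs of a have length at most n and whose runs of a
  enclosed by two b are exactly n long. These two properties survive reversal, and they exclude
  every bad factor: a bad factor of w or of its reverse contains either bb together with an a,
  or a run a^k together with an enclosed run a^l, l < k; a bad factor of E w or E (rev w)
  contains aab, i.e. w contains bba (or its reverse).

  Conversely, a good word is built letter by letter. Appending a letter to such a block word
  either gives a block word again (up to E), or creates one of the bad factors
  a^k b a^l b (k > l \<ge> 1), a^k bb (k \<ge> 2), or an image of them under reversal and E.
\<close>

lemma exch_exch [simp]: "exch (exch x) = x"
  by (cases x) simp_all

lemma E_E [simp]: "E (E w) = w"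
  by (simp add: E_def map_idI)

lemma E_simps [simp]:
  "E [] = []" "E (x # w) = exch x # E w" "E (u @ v) = E u @ E v"
  "E (replicate n x) = replicate n (exch x)"
  by (simp_all add: E_def)

lemma E_concat [simp]: "E (concat ws) = concat (map E ws)"
  by (induct ws) simp_all

lemma rev_E: "rev (E w) = E (rev w)"
  by (simp add: E_def rev_map)

lemma sublist_E: "sublist u w \<Longrightarrow> sublist (E u) (E w)"
  unfolding E_def by (rule map_mono_sublist)

lemma has_bad_factor_sublist: "sublist u w \<Longrightarrow> has_bad_factor u \<Longrightarrow> has_bad_factor w"
  unfolding has_bad_factor_def factor_def by (meson sublist_order.order.trans)

lemma bad_sublist: "sublist u w \<Longrightarrow> bad u \<Longrightarrow> bad w"
  unfolding bad_def by (meson has_bad_factor_sublist sublist_E sublist_rev)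

lemma bad_suffix: "suffix u w \<Longrightarrow> bad u \<Longrightarrow> bad w"
  using bad_sublist suffix_imp_sublist by blast

lemma good_sublist: "sublist u w \<Longrightarrow> good w \<Longrightarrow> good u"
  unfolding good_def using bad_sublist by blast

lemma bad_rev_iff [simp]: "bad (rev w) \<longleftrightarrow> bad w"
  unfolding bad_def by (auto simp: rev_E)

lemma bad_E_iff [simp]: "bad (E w) \<longleftrightarrow> bad w"
  unfolding bad_def by (auto simp flip: rev_E)

lemma good_E_iff [simp]: "good (E w) \<longleftrightarrow> good w"
  by (simp add: good_def)

lemma has_bad_factor_bad: "has_bad_factor w \<Longrightarrow> bad w"
  by (simp add: bad_def)

lemma sublist_replicate_mono: "m \<le> k \<Longrightarrow> sublist (replicate m x) (replicate k x)"
  by (metis le_add_diff_inverse replicate_add sublist_append_rightI)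

lemma has_bad_factor_cases:
  assumes "has_bad_factor w"
  shows "(sublist [b, b] w \<and> sublist [a] w) \<or>
    (\<exists>k l. l < k \<and> sublist (replicate k a) w \<and> sublist (b # replicate l a @ [b]) w)"
  using assms unfolding has_bad_factor_def factor_def
proof (elim disjE exE conjE)
  fix k h assume "2 \<le> k" "2 \<le> h" and w: "sublist (replicate k a @ replicate h b) w"
  have "sublist [b, b] (replicate h b)" and "sublist [a] (replicate k a)"
    using \<open>2 \<le> k\<close> \<open>2 \<le> h\<close> sublist_replicate_mono[of 2 h b] sublist_replicate_mono[of 1 k a]
    by (simp_all add: numeral_2_eq_2)
  then show ?thesis
    using w by (meson sublist_append_leftI sublist_append_rightI sublist_order.order.trans)
next
  fix k l m assume "l < k" "1 \<le> m"
    and w: "sublist (replicate k a @ [b] @ replicate l a @ replicate m b) w"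
  have "replicate k a @ [b] @ replicate l a @ replicate m b
      = replicate k a @ (b # replicate l a @ [b]) @ replicate (m - 1) b"
    using \<open>1 \<le> m\<close> by (cases m) simp_all
  then have "sublist (b # replicate l a @ [b]) w"
    using w by (metis sublist_appendI sublist_order.order.trans)
  moreover have "sublist (replicate k a) w"
    using w by (metis sublist_append_rightI sublist_order.order.trans)
  ultimately show ?thesis using \<open>l < k\<close> by blast
qed

lemma has_bad_factor_sublist_aab:
  assumes "has_bad_factor w"
  shows "sublist [a, a, b] w"
proof -
  have aab: "sublist [a, a, b] (replicate k a @ b # v)" if "2 \<le> k" for k v
  proof -
    obtain k' where k: "k = k' + 2" using \<open>2 \<le> k\<close> le_Suc_ex by (metis add.commute)
    have "replicate k a @ b # v = replicate k' a @ [a, a, b] @ v"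
      unfolding k replicate_add by (simp add: numeral_2_eq_2)
    then show ?thesis by (metis sublist_appendI)
  qed
  from assms obtain k v where "2 \<le> k" "sublist (replicate k a @ b # v) w"
    unfolding has_bad_factor_def factor_def
  proof (elim disjE exE conjE)
    fix k h assume "2 \<le> k" "2 \<le> h" "sublist (replicate k a @ replicate h b) w"
    moreover have "replicate h b = b # replicate (h - 1) b"
      using \<open>2 \<le> h\<close> by (cases h) simp_all
    ultimately show thesis using that by simp
  next
    fix k l m assume "l < k" "1 \<le> l" "sublist (replicate k a @ [b] @ replicate l a @ replicate m b) w"
    then show thesis using that[of k] by simp
  qed
  then show ?thesis using aab sublist_order.order.trans by blast
qed

lemma no_bad_factor_if_a_runs:
  assumes runs: "\<And>k. sublist (replicate k a) w \<Longrightarrow> k \<le> n"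
    and gaps: "\<And>l. sublist (b # replicate l a @ [b]) w \<Longrightarrow> l = n"
  shows "\<not> has_bad_factor w" "\<not> has_bad_factor (E w)"
proof -
  have no_bba: "\<not> (sublist [b, b] w \<and> sublist [a] w)"
    using runs[of 1] gaps[of 0] by force
  then show "\<not> has_bad_factor w"
    using has_bad_factor_cases runs gaps by (metis leD)
  have "sublist [b, b] w \<and> sublist [a] w" if "sublist [a, a, b] (E w)"
  proof -
    have "sublist [b, b, a] w" using sublist_E[OF that] by simp
    then show ?thesis
      by (metis append_Cons append_Nil sublist_appendI sublist_order.order.trans)
  qed
  then show "\<not> has_bad_factor (E w)"
    using no_bba has_bad_factor_sublist_aab by blast
qed

lemma good_if_a_runs:
  assumes runs: "\<And>k. sublist (replicate k a) w \<Longrightarrow> k \<le> n"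
    and gaps: "\<And>l. sublist (b # replicate l a @ [b]) w \<Longrightarrow> l = n"
  shows "good w"
proof -
  have "sublist (replicate k a) (rev w) \<Longrightarrow> k \<le> n" for k
    using runs by (simp add: sublist_rev_right)
  moreover have "sublist (b # replicate l a @ [b]) (rev w) \<Longrightarrow> l = n" for l
    using gaps by (simp add: sublist_rev_right)
  ultimately show ?thesis
    using no_bad_factor_if_a_runs[OF runs gaps]
      no_bad_factor_if_a_runs[of "rev w" n] by (auto simp: good_def bad_def)
qed

definition periodic_word :: "nat \<Rightarrow> nat \<Rightarrow> word" where
  "periodic_word n m = concat (replicate m (replicate n a @ [b])) @ replicate n a"

lemma periodic_word_nth:
  "k < length (periodic_word n m) \<Longrightarrow>
    periodic_word n m ! k = (if k mod Suc n = n then b else a)"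
proof (induction m arbitrary: k)
  case 0
  then show ?case by (simp add: periodic_word_def)
next
  case (Suc m)
  have unfold: "periodic_word n (Suc m) = (replicate n a @ [b]) @ periodic_word n m"
    by (simp add: periodic_word_def)
  show ?case
  proof (cases "k < Suc n")
    case True
    then show ?thesis unfolding unfold by (auto simp: nth_append less_Suc_eq)
  next
    case False
    then have "periodic_word n (Suc m) ! k = periodic_word n m ! (k - Suc n)"
      unfolding unfold by (simp add: nth_append)
    moreover have "k - Suc n < length (periodic_word n m)"
      using Suc.prems False unfolding unfold by simp
    ultimately show ?thesis using Suc.IH False by (simp add: le_mod_geq)
  qed
qed

lemma sublist_periodic_wordE:
  assumes "sublist u (periodic_word n m)"
  obtains s where "\<And>j. j < length u \<Longrightarrow> u ! j = (if (s + j) mod Suc n = n then b else a)"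
proof -
  from assms obtain p q where split: "periodic_word n m = p @ u @ q"
    unfolding sublist_def by blast
  have "u ! j = (if (length p + j) mod Suc n = n then b else a)" if "j < length u" for j
    using periodic_word_nth[of "length p + j" n m] that unfolding split by (simp add: nth_append)
  then show ?thesis using that by blast
qed

lemma periodic_word_a_run:
  assumes "sublist (replicate k a) (periodic_word n m)"
  shows "k \<le> n"
proof (rule ccontr)
  assume "\<not> k \<le> n"
  obtain s where s: "\<And>j. j < k \<Longrightarrow> a = (if (s + j) mod Suc n = n then b else a)"
    using sublist_periodic_wordE[OF assms] by (metis length_replicate nth_replicate)
  \<comment> \<open>the run covers positions s .. s + n, one of which has residue n\<close>
  have "s + (n - s mod Suc n) = s div Suc n * Suc n + n"
    using mod_less_eq_dividend[of s "Suc n"] div_mult_mod_eq[of s "Suc n"]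
      mod_Suc_le_divisor[of s n] by linarith
  then have "(s + (n - s mod Suc n)) mod Suc n = n" by (metis mod_mult_self3 mod_less lessI)
  moreover have "n - s mod Suc n < k" using \<open>\<not> k \<le> n\<close> by linarith
  ultimately show False using s by fastforce
qed

lemma periodic_word_gap:
  assumes "sublist (b # replicate l a @ [b]) (periodic_word n m)"
  shows "l = n"
proof -
  obtain s where s: "\<And>j. j < Suc (Suc l) \<Longrightarrow>
      (b # replicate l a @ [b]) ! j = (if (s + j) mod Suc n = n then b else a)"
    using sublist_periodic_wordE[OF assms] by (metis length_Cons length_append_singleton length_replicate)
  have first: "s mod Suc n = n" using s[of 0] by (simp split: if_splits)
  have inner: "(s + j) mod Suc n \<noteq> n" if "1 \<le> j" "j \<le> l" for j
    using s[of j] that by (auto simp: nth_append split: if_splits)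
  have last: "(s + Suc l) mod Suc n = n" using s[of "Suc l"] by (simp add: nth_append split: if_splits)
  have "(s + Suc n) mod Suc n = n" using first by (simp only: mod_add_self2)
  then have "l < Suc n" using inner[of "Suc n"] by linarith
  moreover have "(s + Suc l) mod Suc n = (l + Suc n) mod Suc n"
    using first by (metis add_Suc_shift add.commute mod_add_left_eq)
  ultimately show ?thesis using last by (metis mod_add_self2 mod_less)
qed

lemma good_periodic_word: "good (periodic_word n m)"
  using good_if_a_runs periodic_word_a_run periodic_word_gap by blast

definition block_word :: "nat \<Rightarrow> nat \<Rightarrow> nat \<Rightarrow> nat \<Rightarrow> word" where
  "block_word n e i f = replicate i a @ concat (replicate e (b # replicate n a)) @ b # replicate f a"

definition is_block_word :: "word \<Rightarrow> bool" where
  "is_block_word w \<longleftrightarrow>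
    (\<exists>n e i f. i \<le> n \<and> f \<le> n \<and> (e = 0 \<longrightarrow> n = max i f) \<and> w = block_word n e i f)"

lemma is_block_wordI:
  "i \<le> n \<Longrightarrow> f \<le> n \<Longrightarrow> (e = 0 \<longrightarrow> n = max i f) \<Longrightarrow> is_block_word (block_word n e i f)"
  unfolding is_block_word_def by (intro exI[of _ n] exI[of _ e] exI[of _ i] exI[of _ f]) simp

lemma concat_replicate_rotate:
  "concat (replicate m (xs @ [y])) @ xs = xs @ concat (replicate m (y # xs))"
  by (induction m) simp_all

lemma concat_replicate_Suc: "concat (replicate (Suc m) xs) = concat (replicate m xs) @ xs"
  by (induction m) simp_all

lemma block_word_sublist_periodic_word:
  assumes "i \<le> n" "f \<le> n"
  shows "sublist (block_word n e i f) (periodic_word n (Suc e))"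
proof -
  have "periodic_word n (Suc e) = replicate n a @ concat (replicate (Suc e) (b # replicate n a))"
    unfolding periodic_word_def by (rule concat_replicate_rotate)
  also have "\<dots> = replicate n a @ concat (replicate e (b # replicate n a)) @ b # replicate n a"
    by (simp only: concat_replicate_Suc append_assoc)
  also have "\<dots> = replicate (n - i) a @ block_word n e i f @ replicate (n - f) a"
  proof -
    have "replicate n a = replicate (n - i) a @ replicate i a"
      "replicate n a = replicate f a @ replicate (n - f) a"
      using assms by (simp_all flip: replicate_add)
    then show ?thesis unfolding block_word_def by simp
  qed
  finally show ?thesis by simp
qed

lemma is_block_word_good: "is_block_word w \<Longrightarrow> good w"
  unfolding is_block_word_def
  using block_word_sublist_periodic_word good_periodic_word good_sublist by blast

lemma bad_a_run_short_gap:
  assumes "l < k" "1 \<le> l"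
  shows "bad (replicate k a @ b # replicate l a @ [b])"
proof -
  have "has_bad_factor (replicate k a @ [b] @ replicate l a @ replicate 1 b)"
    unfolding has_bad_factor_def factor_def using assms
    by (intro disjI2 exI[of _ k] exI[of _ l] exI[of _ 1]) simp
  then show ?thesis by (simp add: has_bad_factor_bad)
qed

lemma bad_a_run_bb:
  assumes "2 \<le> k"
  shows "bad (replicate k a @ [b, b])"
proof -
  have "has_bad_factor (replicate k a @ replicate 2 b)"
    unfolding has_bad_factor_def factor_def using assms
    by (intro disjI1 exI[of _ k] exI[of _ 2]) simp
  then show ?thesis by (simp add: has_bad_factor_bad numeral_2_eq_2)
qed

lemma block_word_Suc: "block_word n (Suc e) i f = block_word n e i n @ b # replicate f a"
  unfolding block_word_def by (simp only: concat_replicate_Suc) simp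

lemma suffix_block_word: "suffix (b # replicate f a) (block_word n e i f)"
  unfolding block_word_def by (metis append.assoc suffixI)

lemma suffix_block_word_last_block:
  assumes "e \<noteq> 0 \<or> i = n"
  shows "suffix (replicate n a @ b # replicate f a) (block_word n e i f)"
proof (cases e)
  case 0
  then show ?thesis using assms by (simp add: block_word_def)
next
  case (Suc e')
  then show ?thesis
    using suffix_ConsD[OF suffix_block_word[where e = e' and f = n]] by (simp add: block_word_Suc)
qed

lemma block_word_snoc_a:
  assumes i: "i \<le> n" and f: "f \<le> n" and e: "e = 0 \<longrightarrow> n = max i f"
    and good: "good (block_word n e i f @ [a])"
  shows "is_block_word (block_word n e i f @ [a]) \<or> is_block_word (E (block_word n e i f @ [a]))"
proof -
  have snoc: "block_word n e i f @ [a] = block_word n e i (Suc f)"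
    by (simp add: block_word_def replicate_append_same)
  consider "f < n" | "f = n" "e = 0" | "f = n" "n = 0" "e \<noteq> 0" | "f = n" "n \<noteq> 0" "e \<noteq> 0"
    using f by linarith
  then show ?thesis
  proof cases
    case 1
    then show ?thesis unfolding snoc using i e by (auto intro!: is_block_wordI)
  next
    case 2
    then have "block_word n e i f @ [a] = block_word (Suc n) 0 i (Suc n)"
      by (simp add: block_word_def replicate_append_same)
    then show ?thesis using i by (simp add: is_block_wordI)
  next
    case 3
    then have "E (block_word n e i f @ [a]) = block_word (Suc e) 0 (Suc e) 0"
      using i by (simp add: block_word_def replicate_app_Cons_same)
    then show ?thesis by (simp add: is_block_wordI)
  next
    case 4
    then obtain e' where e': "e = Suc e'" by (cases e) auto
    have "block_word n e i f @ [a] = block_word n e' i n @ b # replicate (Suc n) a"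
      using 4 unfolding e' block_word_Suc by (simp add: replicate_append_same)
    then have "suffix (b # replicate n a @ b # replicate (Suc n) a) (block_word n e i f @ [a])"
      using suffix_block_word[where e = e' and f = n] by (auto simp: suffix_def)
    moreover have "bad (b # replicate n a @ b # replicate (Suc n) a)"
    proof -
      have "bad (replicate (Suc n) a @ b # replicate n a @ [b])"
        by (rule bad_a_run_short_gap) (use 4 in simp_all)
      moreover have "rev (b # replicate n a @ b # replicate (Suc n) a)
          = replicate (Suc n) a @ b # replicate n a @ [b]"
        by (simp add: replicate_append_same)
      ultimately show ?thesis by (metis bad_rev_iff)
    qed
    ultimately have "bad (block_word n e i f @ [a])"
      using bad_suffix by blast
    then show ?thesis using good by (simp add: good_def)
  qed
qed

lemma block_word_one_snoc_b:
  assumes i: "i \<le> 1" and e: "e = 0 \<longrightarrow> i = 1" and good: "good (block_word 1 e i 0 @ [b])"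
  shows "is_block_word (E (block_word 1 e i 0 @ [b]))"
proof (cases e)
  case 0
  then have "E (block_word 1 e i 0 @ [b]) = block_word 2 0 0 2"
    using e by (simp add: block_word_def numeral_2_eq_2)
  then show ?thesis by (simp add: is_block_wordI)
next
  case (Suc e')
  then have snoc: "block_word 1 e i 0 @ [b] = block_word 1 e' i 1 @ [b, b]"
    by (simp add: block_word_Suc)
  show ?thesis
  proof (cases "e' = 0 \<and> i = 0")
    case True
    then have "E (block_word 1 e i 0 @ [b]) = block_word 2 0 1 2"
      unfolding snoc by (simp add: block_word_def numeral_2_eq_2)
    then show ?thesis by (simp add: is_block_wordI)
  next
    case False
    then have "suffix [a, b, a] (block_word 1 e' i 1)"
      using i suffix_block_word_last_block[of e' i 1 1] by fastforce
    then have "suffix [a, b, a, b, b] (block_word 1 e i 0 @ [b])"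
      unfolding snoc by (auto simp: suffix_def)
    moreover have "bad [a, b, a, b, b]"
    proof -
      have "bad (replicate 2 a @ b # replicate 1 a @ [b])"
        by (rule bad_a_run_short_gap) simp_all
      moreover have "E (rev [a, b, a, b, b]) = replicate 2 a @ b # replicate 1 a @ [b]"
        by (simp add: numeral_2_eq_2)
      ultimately show ?thesis by (metis bad_E_iff bad_rev_iff)
    qed
    ultimately have "bad (block_word 1 e i 0 @ [b])"
      using bad_suffix by blast
    then show ?thesis using good by (simp add: good_def)
  qed
qed

lemma block_word_snoc_b:
  assumes i: "i \<le> n" and f: "f \<le> n" and e: "e = 0 \<longrightarrow> n = max i f"
    and good: "good (block_word n e i f @ [b])"
  shows "is_block_word (block_word n e i f @ [b]) \<or> is_block_word (E (block_word n e i f @ [b]))"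
proof -
  have last_block: "suffix (replicate n a @ b # replicate f a @ [b]) (block_word n e i f @ [b])"
    if "f < n" using suffix_block_word_last_block[of e i n f] e that by auto
  consider "f = n" | "1 \<le> f" "f < n" | "f = 0" "2 \<le> n" | "f = 0" "n = 1"
    using f by linarith
  then show ?thesis
  proof cases
    case 1
    then have "block_word n e i f @ [b] = block_word n (Suc e) i 0"
      by (simp add: block_word_Suc)
    then show ?thesis using i by (simp add: is_block_wordI)
  next
    case 2
    then have "bad (block_word n e i f @ [b])"
      using last_block bad_a_run_short_gap[of f n] bad_suffix by blast
    then show ?thesis using good by (simp add: good_def)
  next
    case 3
    then have "bad (block_word n e i f @ [b])"
      using last_block bad_a_run_bb[of n] bad_suffix by fastforce
    then show ?thesis using good by (simp add: good_def)
  next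
    case 4
    then show ?thesis using block_word_one_snoc_b[of i e] i e good by simp
  qed
qed

lemma is_block_word_snoc:
  assumes "is_block_word w" and "good (w @ [c])"
  shows "is_block_word (w @ [c]) \<or> is_block_word (E (w @ [c]))"
proof -
  obtain n e i f where params: "i \<le> n" "f \<le> n" "e = 0 \<longrightarrow> n = max i f"
    and w: "w = block_word n e i f"
    using assms(1) unfolding is_block_word_def by (elim exE conjE) (rule that)
  show ?thesis
  proof (cases c)
    case a
    then show ?thesis using block_word_snoc_a[OF params] assms(2) unfolding w by simp
  next
    case b
    then show ?thesis using block_word_snoc_b[OF params] assms(2) unfolding w by simp
  qed
qed

lemma good_imp_block_word: "good w \<Longrightarrow> w = [] \<or> is_block_word w \<or> is_block_word (E w)"
proof (induction w rule: rev_induct)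
  case Nil
  then show ?case by simp
next
  case (snoc c w)
  then have "good w" using good_sublist by blast
  with snoc.IH consider "w = []" | "is_block_word w" | "is_block_word (E w)" by blast
  then show ?case
  proof cases
    case 1
    have "is_block_word [b]" using is_block_wordI[of 0 0 0 0] by (simp add: block_word_def)
    then show ?thesis using 1 by (cases c) simp_all
  next
    case 2
    then show ?thesis using is_block_word_snoc snoc.prems by blast
  next
    case 3
    have "good (E (w @ [c]))" using snoc.prems by (simp only: good_E_iff)
    then have "good (E w @ [exch c])" by simp
    then have "is_block_word (E w @ [exch c]) \<or> is_block_word (E (E w @ [exch c]))"
      using 3 is_block_word_snoc by blast
    then show ?thesis by auto
  qed
qed

lemma E_block_word:
  "E (block_word n e i f) = replicate i b @ concat (replicate e (a # replicate n b)) @ a # replicate f b"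
  by (simp add: block_word_def comp_def)

lemma good_iff_block_word: "good w \<longleftrightarrow> w = [] \<or> is_block_word w \<or> is_block_word (E w)"
proof -
  have "good []" using good_periodic_word[of 0 0] by (simp add: periodic_word_def)
  then show ?thesis using good_imp_block_word is_block_word_good good_E_iff by blast
qed

theorem lemma10:
  fixes w :: word
  shows "good w \<longleftrightarrow>
    w = [] \<or>
    (\<exists>n e i f :: nat. i \<le> n \<and> f \<le> n \<and> (e = 0 \<longrightarrow> n = max i f) \<and>
       (w = replicate i a @ concat (replicate e (b # replicate n a)) @ b # replicate f a \<or>
        w = replicate i b @ concat (replicate e (a # replicate n b)) @ a # replicate f b))"
proof -
  have E_eq_iff: "E w = v \<longleftrightarrow> w = E v" for v by auto
  show ?thesis
    unfolding good_iff_block_word is_block_word_def E_eq_iff E_block_word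
    unfolding block_word_def by (simp only: conj_disj_distribL ex_disj_distrib)
qed

end
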